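(* Let $f(t)=\sum_{k=0}^n a_kt^k$ with $a_k\in\mathbb{H}$ be a left quaternion polynomial, and let $r,s\in\mathbb{R}$ with $s\ne0$. Then there exist real numbers $\alpha_1,\dots,\alpha_4,\beta_1,\dots,\beta_4$ such that $$J(f)(r+\mathbf{i}s)=\begin{bmatrix}\alpha_1&-\beta_1&-\alpha_2&\beta_2\\ \beta_1&\alpha_1&\beta_2&\alpha_2\\ \alpha_3&-\beta_3&\alpha_4&-\beta_4\\ -\beta_3&-\alpha_3&\beta_4&\alpha_4\end{bmatrix}.$$
   Context: $\mathbb{H}$ is the real quaternion algebra, identified with $\mathbb{R}^4$ via $x+\mathbf{i}y+\mathbf{j}z+\mathbf{k}w\mapsto(x,y,z,w)$. A left polynomial $f(t)=\sum a_kt^k$ is evaluated at $c\in\mathbb{H}$ as $\sum a_kc^k$ and is viewed as a map $\mathbb{R}^4\to\mathbb{R}^4$ via $f=f_1+\mathbf{i}f_2+\mathbf{j}f_3+\mathbf{k}f_4\mapsto(f_1,f_2,f_3,f_4)$; $J(f)(c)=[\partial f_i/\partial x_j](c)$ with $(x_1,\dots,x_4)=(x,y,z,w)$. *)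

theory Defs
  imports "HOL-Analysis.Analysis"
begin

text \<open>Real quaternions x + i y + j z + k w, represented by their four real coordinates.\<close>
datatype quat = Quat (q1: real) (q2: real) (q3: real) (q4: real)

definition qmul :: "quat \<Rightarrow> quat \<Rightarrow> quat" where
  "qmul p q = Quat
     (q1 p * q1 q - q2 p * q2 q - q3 p * q3 q - q4 p * q4 q)
     (q1 p * q2 q + q2 p * q1 q + q3 p * q4 q - q4 p * q3 q)
     (q1 p * q3 q - q2 p * q4 q + q3 p * q1 q + q4 p * q2 q)
     (q1 p * q4 q + q2 p * q3 q - q3 p * q2 q + q4 p * q1 q)"

definition qone :: quat where "qone = Quat 1 0 0 0"

fun qpow :: "quat \<Rightarrow> nat \<Rightarrow> quat" where
  "qpow c 0 = qone"
| "qpow c (Suc k) = qmul (qpow c k) c"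

definition qcoord :: "quat \<Rightarrow> nat \<Rightarrow> real" where
  "qcoord q i = (if i = 1 then q1 q else if i = 2 then q2 q else if i = 3 then q3 q else q4 q)"

definition qofcoords :: "(nat \<Rightarrow> real) \<Rightarrow> quat" where
  "qofcoords x = Quat (x 1) (x 2) (x 3) (x 4)"

definition leval :: "(nat \<Rightarrow> quat) \<Rightarrow> nat \<Rightarrow> quat \<Rightarrow> quat" where
  "leval a n c = qofcoords (\<lambda>i. \<Sum>k\<le>n. qcoord (qmul (a k) (qpow c k)) i)"

definition jacobian :: "(quat \<Rightarrow> quat) \<Rightarrow> quat \<Rightarrow> nat \<Rightarrow> nat \<Rightarrow> real" where
  "jacobian F c i j =
     deriv (\<lambda>t. qcoord (F (qofcoords (\<lambda>l. qcoord c l + (if l = j then t else 0)))) i) 0"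

end

theory Submission
  imports Defs
begin

text \<open>The j-th column of the Jacobian of f at c is the directional derivative of f at c in the
  direction of the j-th basis quaternion e_j. For f(t) = \<Sum> a_k t^k this derivative is
  \<Sum> a_k D_k(c, d), where D_k(c, d) = \<Sum>_{m<k} c^m d c^{k-1-m} is the derivative of t^k. If u
  commutes with c, then D_k(c, d u) = D_k(c, d) u, so the derivative is right-multiplicative in
  such directions. For c = r + i s the unit i commutes with c, and e_2 = e_1 i, e_4 = e_3 (-i);
  hence columns 2 and 4 are columns 1 and 3 multiplied on the right by i and -i, which is
  exactly the claimed pattern.\<close>

definition qadd :: "quat \<Rightarrow> quat \<Rightarrow> quat" where
  "qadd p q = Quat (q1 p + q1 q) (q2 p + q2 q) (q3 p + q3 q) (q4 p + q4 q)"

definition qscale :: "real \<Rightarrow> quat \<Rightarrow> quat" where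
  "qscale t q = Quat (t * q1 q) (t * q2 q) (t * q3 q) (t * q4 q)"

definition qbasis :: "nat \<Rightarrow> quat" where
  "qbasis j = qofcoords (\<lambda>l. if l = j then 1 else 0)"

definition qsum :: "(nat \<Rightarrow> quat) \<Rightarrow> nat set \<Rightarrow> quat" where
  "qsum f A = qofcoords (\<lambda>i. \<Sum>k\<in>A. qcoord (f k) i)"

lemma qcoord_qsum: "i \<in> {1..4} \<Longrightarrow> qcoord (qsum f A) i = (\<Sum>k\<in>A. qcoord (f k) i)"
  by (auto simp: qsum_def qofcoords_def qcoord_def)

lemma qsum_qmul_right: "qsum (\<lambda>k. qmul (f k) u) A = qmul (qsum f A) u"
  by (simp add: qsum_def qofcoords_def qcoord_def qmul_def sum_distrib_right sum.distrib
      sum_subtractf)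

lemma qmul_assoc: "qmul (qmul p q) r = qmul p (qmul q r)"
  by (simp add: qmul_def algebra_simps)

lemma qmul_qadd_distrib_right: "qmul (qadd p q) r = qadd (qmul p r) (qmul q r)"
  by (simp add: qmul_def qadd_def algebra_simps)

definition has_quat_derivative :: "(real \<Rightarrow> quat) \<Rightarrow> quat \<Rightarrow> real \<Rightarrow> bool" where
  "has_quat_derivative F F' x \<longleftrightarrow>
     ((\<lambda>t. q1 (F t)) has_real_derivative q1 F') (at x) \<and>
     ((\<lambda>t. q2 (F t)) has_real_derivative q2 F') (at x) \<and>
     ((\<lambda>t. q3 (F t)) has_real_derivative q3 F') (at x) \<and>
     ((\<lambda>t. q4 (F t)) has_real_derivative q4 F') (at x)"

lemma has_quat_derivative_qcoord:
  assumes "has_quat_derivative F F' x" and "i \<in> {1..4}"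
  shows "((\<lambda>t. qcoord (F t) i) has_real_derivative qcoord F' i) (at x)"
proof -
  from assms(2) have "i = 1 \<or> i = 2 \<or> i = 3 \<or> i = 4"
    by auto
  with assms(1) show ?thesis
    by (auto simp: has_quat_derivative_def qcoord_def)
qed

lemma has_quat_derivative_const: "has_quat_derivative (\<lambda>t. c) (Quat 0 0 0 0) x"
  by (simp add: has_quat_derivative_def)

lemma has_quat_derivative_line: "has_quat_derivative (\<lambda>t. qadd c (qscale t d)) d x"
  by (auto simp: has_quat_derivative_def qadd_def qscale_def intro!: derivative_eq_intros)

lemma has_quat_derivative_qmul:
  assumes "has_quat_derivative F F' x" and "has_quat_derivative G G' x"
  shows "has_quat_derivative (\<lambda>t. qmul (F t) (G t)) (qadd (qmul F' (G x)) (qmul (F x) G')) x"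
  using assms unfolding has_quat_derivative_def qmul_def qadd_def quat.sel
  by (elim conjE)
     (intro conjI; rule DERIV_cong, (rule DERIV_add DERIV_diff DERIV_mult' | assumption)+,
      simp add: algebra_simps)

fun qpow_deriv :: "quat \<Rightarrow> quat \<Rightarrow> nat \<Rightarrow> quat" where
  "qpow_deriv c d 0 = Quat 0 0 0 0"
| "qpow_deriv c d (Suc k) = qadd (qmul (qpow_deriv c d k) c) (qmul (qpow c k) d)"

lemma has_quat_derivative_qpow:
  "has_quat_derivative (\<lambda>t. qpow (qadd c (qscale t d)) k) (qpow_deriv c d k) 0"
proof (induction k)
  case 0
  show ?case using has_quat_derivative_const by simp
next
  case (Suc k)
  have "qadd c (qscale 0 d) = c"
    by (simp add: qadd_def qscale_def)
  with has_quat_derivative_qmul[OF Suc.IH has_quat_derivative_line[of c d 0]] show ?case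
    by simp
qed

lemma qpow_deriv_qmul_right:
  assumes "qmul c u = qmul u c"
  shows "qpow_deriv c (qmul d u) k = qmul (qpow_deriv c d k) u"
proof (induction k)
  case 0
  show ?case by (simp add: qmul_def)
next
  case (Suc k)
  have "qmul (qmul (qpow_deriv c d k) u) c = qmul (qmul (qpow_deriv c d k) c) u"
    by (simp add: qmul_assoc assms)
  with Suc.IH show ?case
    by (simp add: qmul_qadd_distrib_right qmul_assoc)
qed

definition leval_deriv :: "(nat \<Rightarrow> quat) \<Rightarrow> nat \<Rightarrow> quat \<Rightarrow> quat \<Rightarrow> quat" where
  "leval_deriv a n c d = qsum (\<lambda>k. qmul (a k) (qpow_deriv c d k)) {..n}"

lemma jacobian_leval:
  assumes "i \<in> {1..4}" and "j \<in> {1..4}"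
  shows "jacobian (leval a n) c i j = qcoord (leval_deriv a n c (qbasis j)) i"
proof -
  have line:
    "qofcoords (\<lambda>l. qcoord c l + (if l = j then t else 0)) = qadd c (qscale t (qbasis j))" for t
    using assms(2) by (auto simp: qofcoords_def qcoord_def qadd_def qscale_def qbasis_def)
  have "((\<lambda>t. qcoord (qmul (a k) (qpow (qadd c (qscale t (qbasis j))) k)) i)
          has_real_derivative qcoord (qmul (a k) (qpow_deriv c (qbasis j) k)) i) (at 0)" for k
    using has_quat_derivative_qcoord[OF has_quat_derivative_qmul[OF has_quat_derivative_const
        has_quat_derivative_qpow] assms(1)]
    by (simp add: qmul_def qadd_def)
  then show ?thesis
    unfolding jacobian_def leval_def leval_deriv_def line qsum_def[symmetric]
      qcoord_qsum[OF assms(1)]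
    by (intro DERIV_imp_deriv DERIV_sum)
qed

lemma leval_deriv_qmul_right:
  assumes "qmul c u = qmul u c"
  shows "leval_deriv a n c (qmul d u) = qmul (leval_deriv a n c d) u"
  by (simp add: leval_deriv_def qpow_deriv_qmul_right[OF assms] qmul_assoc[symmetric]
      qsum_qmul_right)

lemma matrix_pattern_of_columns:
  fixes J :: "nat \<Rightarrow> nat \<Rightarrow> real" and col :: "nat \<Rightarrow> quat"
  assumes J: "\<And>i j. i \<in> {1..4} \<Longrightarrow> j \<in> {1..4} \<Longrightarrow> J i j = qcoord (col j) i"
    and "col 2 = qmul (col 1) (Quat 0 1 0 0)" and "col 4 = qmul (col 3) (Quat 0 (-1) 0 0)"
  shows "\<exists>\<alpha>1 \<alpha>2 \<alpha>3 \<alpha>4 \<beta>1 \<beta>2 \<beta>3 \<beta>4 :: real.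
    \<forall>i\<in>{1..4}. \<forall>j\<in>{1..4}.
      J i j =
      [[\<alpha>1, -\<beta>1, -\<alpha>2, \<beta>2],
       [\<beta>1, \<alpha>1, \<beta>2, \<alpha>2],
       [\<alpha>3, -\<beta>3, \<alpha>4, -\<beta>4],
       [-\<beta>3, -\<alpha>3, \<beta>4, \<alpha>4]] ! (i - 1) ! (j - 1)"
proof (intro exI ballI)
  have col2: "q1 (col 2) = - q2 (col 1)" "q2 (col 2) = q1 (col 1)"
      "q3 (col 2) = q4 (col 1)" "q4 (col 2) = - q3 (col 1)"
    and col4: "q1 (col 4) = q2 (col 3)" "q2 (col 4) = - q1 (col 3)"
      "q3 (col 4) = - q4 (col 3)" "q4 (col 4) = q3 (col 3)"
    using assms(2,3) by (simp_all add: qmul_def)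
  fix i j :: nat
  assume ij: "i \<in> {1..4}" "j \<in> {1..4}"
  then have "i \<in> {1, 2, 3, 4}" "j \<in> {1, 2, 3, 4}"
    by auto
  then show "J i j =
      [[q1 (col 1), - q2 (col 1), - (- q1 (col 3)), q2 (col 3)],
       [q2 (col 1), q1 (col 1), q2 (col 3), - q1 (col 3)],
       [q3 (col 1), - (- q4 (col 1)), q3 (col 3), - q4 (col 3)],
       [- (- q4 (col 1)), - q3 (col 1), q4 (col 3), q3 (col 3)]] ! (i - 1) ! (j - 1)"
    unfolding J[OF ij] qcoord_def by (elim insertE emptyE; simp add: col2 col4)
qed

theorem proposition4p1:
  fixes a :: "nat \<Rightarrow> quat" and n :: nat and r s :: real
  assumes "s \<noteq> 0"
  shows "\<exists>\<alpha>1 \<alpha>2 \<alpha>3 \<alpha>4 \<beta>1 \<beta>2 \<beta>3 \<beta>4 :: real.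
    \<forall>i\<in>{1..4}. \<forall>j\<in>{1..4}.
      jacobian (leval a n) (Quat r s 0 0) i j =
      [[\<alpha>1, -\<beta>1, -\<alpha>2, \<beta>2],
       [\<beta>1, \<alpha>1, \<beta>2, \<alpha>2],
       [\<alpha>3, -\<beta>3, \<alpha>4, -\<beta>4],
       [-\<beta>3, -\<alpha>3, \<beta>4, \<alpha>4]] ! (i - 1) ! (j - 1)"
proof (rule matrix_pattern_of_columns[where col = "\<lambda>j. leval_deriv a n (Quat r s 0 0) (qbasis j)"])
  let ?c = "Quat r s 0 0"
  have commutes: "qmul ?c (Quat 0 t 0 0) = qmul (Quat 0 t 0 0) ?c" for t
    by (simp add: qmul_def)
  have "qbasis 2 = qmul (qbasis 1) (Quat 0 1 0 0)" "qbasis 4 = qmul (qbasis 3) (Quat 0 (-1) 0 0)"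
    by (simp_all add: qbasis_def qofcoords_def qmul_def)
  then show "leval_deriv a n ?c (qbasis 2) = qmul (leval_deriv a n ?c (qbasis 1)) (Quat 0 1 0 0)"
    and "leval_deriv a n ?c (qbasis 4) = qmul (leval_deriv a n ?c (qbasis 3)) (Quat 0 (-1) 0 0)"
    by (simp_all add: leval_deriv_qmul_right[OF commutes])
qed (rule jacobian_leval)

end
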